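(* Let $\triangle$ and $\square$ be the scenarios and $e$ the possibilistic model on $\triangle$ described in the context. There is no possibilistic empirical model $d$ on $\square$ and no possibilistic procedure $f\colon\square\to\triangle$ with $\mathrm{Emp}_{\mathbb B}(f)d\le e$. In particular, there is no probabilistic empirical model $d$ on $\square$ and probabilistic procedure $f\colon\square\to\triangle$ such that $\mathrm{Emp}(f)d$ equals the probabilistic model $e$.
   Context: A measurement scenario consists of a finite set of measurements, finite non-empty outcome sets $O_x$, and a simplicial complex of contexts (subsets containing $\emptyset$ and all singletons, closed under subsets); $\mathcal E(U)=\prod_{x\in U}O_x$. A simplicial relation $R$ from $\Sigma$ (on $X$) to $\Delta$ (on $Y$) is a relation $R\subseteq X\times Y$ with $R(\sigma)\in\Delta$ for all $\sigma\in\Sigma$. A deterministic procedure $f\colon S\to T$ is a pair $(\pi_f,\alpha_f)$, $\pi_f$ a simplicial relation from $\Sigma_T$ to $\Sigma_S$, $\alpha_{f,x}\colon\mathcal E_S(\pi_f(x))\to O_{T,x}$; probabilistic procedures are finitely supported probability distributions on deterministic ones, possibilistic procedures are non-empty finite sets of them. Probabilistic/possibilistic empirical models and the actions $\mathrm{Emp}$, $\mathrm{Emp}_{\mathbb B}$: for deterministic $f$, $(\mathrm{Emp}(f)e)_\sigma$ is the push-forward (resp. $(\mathrm{Emp}_{\mathbb B}(f)e)_\sigma$ the image) of $e_{\pi_f(\sigma)}$ along $s\mapsto(\alpha_{f,x}(s|_{\pi_f(x)}))_{x\in\sigma}$, extended by convex combination (resp. contextwise union); possibilistic models are ordered by contextwise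 inclusion. $\triangle$ has measurements $a,b,c$, each with outcomes $\{0,1\}$, and contexts all subsets of size at most $2$. $\square$ has measurements $p,q,r,u$, each with outcomes $\{0,1\}$, and maximal contexts $\{p,q\},\{q,r\},\{r,u\},\{u,p\}$ (so contexts are these, their subsets). The probabilistic model $e$ on $\triangle$ has $e_{\{a,b\}}$ uniform on $\{(0,1),(1,0)\}$, $e_{\{b,c\}}$ uniform on $\{(0,0),(1,1)\}$, $e_{\{a,c\}}$ uniform on $\{(0,0),(1,1)\}$, with uniform marginals on singletons; the possibilistic $e$ is its collection of supports. *)

theory Defs
  imports "HOL-Probability.Probability" "HOL-Library.FuncSet"
begin

text \<open>A scenario is given by a set of measurements X, outcome sets Out x and a set of
contexts Sigma. Joint outcomes on U are the extensional functions in PiE U O.\<close>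

definition poss_model ::
  "'x set \<Rightarrow> ('x \<Rightarrow> 'o set) \<Rightarrow> 'x set set \<Rightarrow> ('x set \<Rightarrow> ('x \<Rightarrow> 'o) set) \<Rightarrow> bool" where
  "poss_model X Out Sig e \<longleftrightarrow>
     (\<forall>\<sigma>\<in>Sig. e \<sigma> \<subseteq> PiE \<sigma> Out \<and> e \<sigma> \<noteq> {}) \<and>
     (\<forall>\<sigma>\<in>Sig. \<forall>\<tau>\<in>Sig. \<tau> \<subseteq> \<sigma> \<longrightarrow> (\<lambda>s. restrict s \<tau>) ` e \<sigma> = e \<tau>)"

definition prob_model ::
  "'x set \<Rightarrow> ('x \<Rightarrow> 'o set) \<Rightarrow> 'x set set \<Rightarrow> ('x set \<Rightarrow> ('x \<Rightarrow> 'o) pmf) \<Rightarrow> bool" where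
  "prob_model X Out Sig e \<longleftrightarrow>
     (\<forall>\<sigma>\<in>Sig. set_pmf (e \<sigma>) \<subseteq> PiE \<sigma> Out) \<and>
     (\<forall>\<sigma>\<in>Sig. \<forall>\<tau>\<in>Sig. \<tau> \<subseteq> \<sigma> \<longrightarrow> map_pmf (\<lambda>s. restrict s \<tau>) (e \<sigma>) = e \<tau>)"

text \<open>A deterministic procedure S \<rightarrow> T: a simplicial relation pi from Sigma_T to Sigma_S
(a relation between measurements of T and of S) together with functions
alpha y : E_S(pi(y)) \<rightarrow> O_T y.\<close>

type_synonym ('y, 'x, 'o, 'p) det_proc = "('y \<times> 'x) set \<times> ('y \<Rightarrow> ('x \<Rightarrow> 'o) \<Rightarrow> 'p)"

definition det_proc ::
  "'x set \<Rightarrow> ('x \<Rightarrow> 'o set) \<Rightarrow> 'x set set \<Rightarrow>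
   'y set \<Rightarrow> ('y \<Rightarrow> 'p set) \<Rightarrow> 'y set set \<Rightarrow> ('y, 'x, 'o, 'p) det_proc \<Rightarrow> bool" where
  "det_proc XS OS SigS XT OT SigT f \<longleftrightarrow>
     fst f \<subseteq> XT \<times> XS \<and>
     (\<forall>\<sigma>\<in>SigT. fst f `` \<sigma> \<in> SigS) \<and>
     (\<forall>y\<in>XT. \<forall>s\<in>PiE (fst f `` {y}) OS. snd f y s \<in> OT y)"

definition proc_map :: "('y, 'x, 'o, 'p) det_proc \<Rightarrow> 'y set \<Rightarrow> ('x \<Rightarrow> 'o) \<Rightarrow> ('y \<Rightarrow> 'p)" where
  "proc_map f \<sigma> s = restrict (\<lambda>y. snd f y (restrict s (fst f `` {y}))) \<sigma>"

definition empB_det :: "('y, 'x, 'o, 'p) det_proc \<Rightarrow> ('x set \<Rightarrow> ('x \<Rightarrow> 'o) set) \<Rightarrow> 'y set \<Rightarrow> ('y \<Rightarrow> 'p) set" where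
  "empB_det f d \<sigma> = proc_map f \<sigma> ` d (fst f `` \<sigma>)"

definition emp_det :: "('y, 'x, 'o, 'p) det_proc \<Rightarrow> ('x set \<Rightarrow> ('x \<Rightarrow> 'o) pmf) \<Rightarrow> 'y set \<Rightarrow> ('y \<Rightarrow> 'p) pmf" where
  "emp_det f d \<sigma> = map_pmf (proc_map f \<sigma>) (d (fst f `` \<sigma>))"

definition poss_proc where
  "poss_proc XS OS SigS XT OT SigT F \<longleftrightarrow>
     F \<noteq> {} \<and> finite F \<and> (\<forall>f\<in>F. det_proc XS OS SigS XT OT SigT f)"

definition empB :: "('y, 'x, 'o, 'p) det_proc set \<Rightarrow> ('x set \<Rightarrow> ('x \<Rightarrow> 'o) set) \<Rightarrow> 'y set \<Rightarrow> ('y \<Rightarrow> 'p) set" where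
  "empB F d \<sigma> = (\<Union>f\<in>F. empB_det f d \<sigma>)"

definition prob_proc where
  "prob_proc XS OS SigS XT OT SigT F \<longleftrightarrow>
     finite (set_pmf F) \<and> (\<forall>f\<in>set_pmf F. det_proc XS OS SigS XT OT SigT f)"

definition emp :: "('y, 'x, 'o, 'p) det_proc pmf \<Rightarrow> ('x set \<Rightarrow> ('x \<Rightarrow> 'o) pmf) \<Rightarrow> 'y set \<Rightarrow> ('y \<Rightarrow> 'p) pmf" where
  "emp F d \<sigma> = bind_pmf F (\<lambda>f. emp_det f d \<sigma>)"

datatype tri = A | B | C
datatype sq = P | Q | R | U

text \<open>Outcomes {0,1} are rendered as bool (False = 0, True = 1).\<close>
definition binO :: "'a \<Rightarrow> bool set" where "binO x = UNIV"

definition triSig :: "tri set set" where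
  "triSig = {\<sigma>. card \<sigma> \<le> 2}"

definition sqSig :: "sq set set" where
  "sqSig = {\<sigma>. \<sigma> \<subseteq> {P, Q} \<or> \<sigma> \<subseteq> {Q, R} \<or> \<sigma> \<subseteq> {R, U} \<or> \<sigma> \<subseteq> {U, P}}"

definition e_poss :: "tri set \<Rightarrow> (tri \<Rightarrow> bool) set" where
  "e_poss \<sigma> = {s \<in> PiE \<sigma> binO.
      (A \<in> \<sigma> \<and> B \<in> \<sigma> \<longrightarrow> s A \<noteq> s B) \<and>
      (B \<in> \<sigma> \<and> C \<in> \<sigma> \<longrightarrow> s B = s C) \<and>
      (A \<in> \<sigma> \<and> C \<in> \<sigma> \<longrightarrow> s A = s C)}"

definition e_prob :: "tri set \<Rightarrow> (tri \<Rightarrow> bool) pmf" where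
  "e_prob \<sigma> = pmf_of_set (e_poss \<sigma>)"

end

theory Submission
  imports Defs
begin

text \<open>A deterministic procedure \<open>\<square> \<rightarrow> \<triangle>\<close> sends every edge of \<open>\<triangle>\<close> to a context of \<open>\<square>\<close>.
Since \<open>\<square>\<close> is a flag complex (a set is a context as soon as it contains no diagonal of the
square), the images of the three edges together also form a context \<open>W\<close>. Choosing one
outcome of \<open>d\<close> on \<open>W\<close> and restricting it to the images of the edges yields, by compatibility
of \<open>d\<close>, outcomes of the transformed model on all three edges that come from one global
assignment \<open>g\<close> of \<open>a, b, c\<close>. The support of \<open>e\<close> would force \<open>g a \<noteq> g b = g c = g a\<close>.
The probabilistic statement follows by passing to supports.\<close>

lemma proc_map_restrict:
  assumes "y \<in> \<sigma>"
  shows "proc_map f \<sigma> (restrict t (fst f `` \<sigma>)) y = snd f y (restrict t (fst f `` {y}))"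
proof -
  have "fst f `` {y} \<subseteq> fst f `` \<sigma>" using assms by blast
  then show ?thesis
    using assms by (simp add: proc_map_def Int_absorb1)
qed

lemma proc_map_restrict_in_empB_det:
  assumes "poss_model X Out Sig d" and "W \<in> Sig" and "t \<in> d W"
    and "fst f `` \<sigma> \<in> Sig" and "fst f `` \<sigma> \<subseteq> W"
  shows "proc_map f \<sigma> (restrict t (fst f `` \<sigma>)) \<in> empB_det f d \<sigma>"
proof -
  have "(\<lambda>s. restrict s (fst f `` \<sigma>)) ` d W = d (fst f `` \<sigma>)"
    using assms unfolding poss_model_def by blast
  then show ?thesis
    using \<open>t \<in> d W\<close> unfolding empB_det_def by blast
qed

lemma poss_model_set_pmf:
  assumes "prob_model X Out Sig d"
  shows "poss_model X Out Sig (\<lambda>\<sigma>. set_pmf (d \<sigma>))"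
  unfolding poss_model_def
proof (intro conjI ballI impI)
  fix \<sigma> assume "\<sigma> \<in> Sig"
  then show "set_pmf (d \<sigma>) \<subseteq> PiE \<sigma> Out" using assms unfolding prob_model_def by blast
  show "set_pmf (d \<sigma>) \<noteq> {}" by (rule set_pmf_not_empty)
next
  fix \<sigma> \<tau> assume "\<sigma> \<in> Sig" "\<tau> \<in> Sig" "\<tau> \<subseteq> \<sigma>"
  then have "map_pmf (\<lambda>s. restrict s \<tau>) (d \<sigma>) = d \<tau>"
    using assms unfolding prob_model_def by blast
  then show "(\<lambda>s. restrict s \<tau>) ` set_pmf (d \<sigma>) = set_pmf (d \<tau>)"
    by (metis set_map_pmf)
qed

lemma poss_proc_set_pmf:
  "prob_proc XS OS SigS XT OT SigT F \<Longrightarrow> poss_proc XS OS SigS XT OT SigT (set_pmf F)"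
  unfolding prob_proc_def poss_proc_def by (simp add: set_pmf_not_empty)

lemma set_pmf_emp: "set_pmf (emp F d \<sigma>) = empB (set_pmf F) (\<lambda>\<sigma>. set_pmf (d \<sigma>)) \<sigma>"
  by (simp add: emp_def emp_det_def empB_def empB_det_def)

lemma sq_UNIV: "(UNIV :: sq set) = {P, Q, R, U}"
  using sq.exhaust by auto

lemma sqSig_iff_no_diagonal: "W \<in> sqSig \<longleftrightarrow> \<not> {P, R} \<subseteq> W \<and> \<not> {Q, U} \<subseteq> W"
proof
  show "W \<in> sqSig \<Longrightarrow> \<not> {P, R} \<subseteq> W \<and> \<not> {Q, U} \<subseteq> W"
    unfolding sqSig_def by auto
next
  assume "\<not> {P, R} \<subseteq> W \<and> \<not> {Q, U} \<subseteq> W"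
  then consider "P \<notin> W" "Q \<notin> W" | "Q \<notin> W" "R \<notin> W" | "R \<notin> W" "U \<notin> W" | "U \<notin> W" "P \<notin> W"
    by blast
  then show "W \<in> sqSig"
    unfolding sqSig_def using subset_UNIV[of W] unfolding sq_UNIV by cases blast+
qed

lemma sqSig_subset: "W \<in> sqSig \<Longrightarrow> V \<subseteq> W \<Longrightarrow> V \<in> sqSig"
  unfolding sqSig_def by blast

lemma Image_in_sqSig:
  assumes "\<forall>a\<in>S. \<forall>b\<in>S. \<rho> `` {a, b} \<in> sqSig"
  shows "\<rho> `` S \<in> sqSig"
proof -
  have "{x, y} \<in> sqSig" if xy: "{x, y} \<subseteq> \<rho> `` S" for x y
  proof -
    obtain a b where "a \<in> S" "(a, x) \<in> \<rho>" "b \<in> S" "(b, y) \<in> \<rho>"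
      using xy by blast
    then have "{x, y} \<subseteq> \<rho> `` {a, b}" and "\<rho> `` {a, b} \<in> sqSig"
      using assms by blast+
    then show ?thesis by (rule sqSig_subset[rotated])
  qed
  moreover have "{P, R} \<notin> sqSig" "{Q, U} \<notin> sqSig"
    by (simp_all add: sqSig_iff_no_diagonal)
  ultimately show ?thesis unfolding sqSig_iff_no_diagonal by blast
qed

lemma tri_UNIV: "(UNIV :: tri set) = {A, B, C}"
  using tri.exhaust by auto

lemma e_poss_nonempty:
  assumes "\<sigma> \<in> triSig"
  shows "e_poss \<sigma> \<noteq> {}"
proof -
  have "\<sigma> \<noteq> UNIV"
    using assms by (auto simp: triSig_def tri_UNIV)
  then obtain x where "x \<notin> \<sigma>" by blast
  \<comment> \<open>All ones works unless the only edge left is the anticorrelated one.\<close>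
  then have "restrict (\<lambda>y. C \<in> \<sigma> \<or> y = A) \<sigma> \<in> e_poss \<sigma>"
    by (cases x) (auto simp: e_poss_def binO_def)
  then show ?thesis by blast
qed

lemma set_pmf_e_prob:
  assumes "\<sigma> \<in> triSig"
  shows "set_pmf (e_prob \<sigma>) = e_poss \<sigma>"
proof -
  have "finite (PiE \<sigma> binO)"
    by (rule finite_PiE) (auto simp: binO_def finite_subset[OF subset_UNIV] tri_UNIV)
  then have "finite (e_poss \<sigma>)"
    by (rule finite_subset[rotated]) (auto simp: e_poss_def)
  then show ?thesis
    unfolding e_prob_def using e_poss_nonempty[OF assms] by simp
qed

lemma empB_det_not_below_e_poss:
  assumes f: "det_proc (UNIV :: sq set) binO sqSig (UNIV :: tri set) binO triSig f"
    and d: "poss_model (UNIV :: sq set) binO sqSig d"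
  shows "\<exists>\<sigma>\<in>triSig. \<not> empB_det f d \<sigma> \<subseteq> e_poss \<sigma>"
proof (rule ccontr)
  assume "\<not> ?thesis"
  then have below: "empB_det f d \<sigma> \<subseteq> e_poss \<sigma>" if "\<sigma> \<in> triSig" for \<sigma>
    using that by blast
  have edge_ctx: "fst f `` {a, b} \<in> sqSig" for a b
  proof -
    have "{a, b} \<in> triSig" unfolding triSig_def by (cases "a = b") auto
    then show ?thesis using f unfolding det_proc_def by blast
  qed
  define W where "W = fst f `` UNIV"
  have W: "W \<in> sqSig" unfolding W_def by (rule Image_in_sqSig) (use edge_ctx in blast)
  then obtain t where t: "t \<in> d W" using d unfolding poss_model_def by (meson ex_in_conv)
  define g where "g y = snd f y (restrict t (fst f `` {y}))" for y
  define h where "h \<sigma> = proc_map f \<sigma> (restrict t (fst f `` \<sigma>))" for \<sigma>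
  have h_e_poss: "h \<sigma> \<in> e_poss \<sigma>" if "\<sigma> \<in> triSig" for \<sigma>
  proof -
    have "fst f `` \<sigma> \<in> sqSig" using f that unfolding det_proc_def by blast
    moreover have "fst f `` \<sigma> \<subseteq> W" unfolding W_def by blast
    ultimately have "h \<sigma> \<in> empB_det f d \<sigma>"
      unfolding h_def by (rule proc_map_restrict_in_empB_det[OF d W t])
    then show ?thesis using below that by blast
  qed
  have h_g: "h \<sigma> y = g y" if "y \<in> \<sigma>" for \<sigma> y
    unfolding h_def g_def using that by (rule proc_map_restrict)
  have edges: "{A, B} \<in> triSig" "{B, C} \<in> triSig" "{A, C} \<in> triSig"
    by (simp_all add: triSig_def)
  have "g A \<noteq> g B" using h_e_poss[OF edges(1)] h_g[of _ "{A, B}"] by (simp add: e_poss_def)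
  moreover have "g B = g C" using h_e_poss[OF edges(2)] h_g[of _ "{B, C}"] by (simp add: e_poss_def)
  moreover have "g A = g C" using h_e_poss[OF edges(3)] h_g[of _ "{A, C}"] by (simp add: e_poss_def)
  ultimately show False by simp
qed

lemma empB_not_below_e_poss:
  assumes "poss_proc (UNIV :: sq set) binO sqSig (UNIV :: tri set) binO triSig F"
    and "poss_model (UNIV :: sq set) binO sqSig d"
  shows "\<exists>\<sigma>\<in>triSig. \<not> empB F d \<sigma> \<subseteq> e_poss \<sigma>"
proof -
  obtain f where "f \<in> F" and "det_proc (UNIV :: sq set) binO sqSig (UNIV :: tri set) binO triSig f"
    using assms(1) unfolding poss_proc_def by blast
  then show ?thesis
    using empB_det_not_below_e_poss[OF _ assms(2)] unfolding empB_def by blast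
qed

theorem mainTheorem14:
  shows "(\<nexists>d F. poss_model (UNIV :: sq set) binO sqSig d \<and>
             poss_proc (UNIV :: sq set) binO sqSig (UNIV :: tri set) binO triSig F \<and>
             (\<forall>\<sigma>\<in>triSig. empB F d \<sigma> \<subseteq> e_poss \<sigma>)) \<and>
         (\<nexists>d F. prob_model (UNIV :: sq set) binO sqSig d \<and>
             prob_proc (UNIV :: sq set) binO sqSig (UNIV :: tri set) binO triSig F \<and>
             (\<forall>\<sigma>\<in>triSig. emp F d \<sigma> = e_prob \<sigma>))"
proof (intro conjI notI; elim exE conjE)
  fix d F
  assume "poss_model (UNIV :: sq set) binO sqSig d"
    and "poss_proc (UNIV :: sq set) binO sqSig (UNIV :: tri set) binO triSig F"
    and "\<forall>\<sigma>\<in>triSig. empB F d \<sigma> \<subseteq> e_poss \<sigma>"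
  then show False using empB_not_below_e_poss by blast
next
  fix d F
  assume "prob_model (UNIV :: sq set) binO sqSig d"
    and "prob_proc (UNIV :: sq set) binO sqSig (UNIV :: tri set) binO triSig F"
    and simulates: "\<forall>\<sigma>\<in>triSig. emp F d \<sigma> = e_prob \<sigma>"
  then obtain \<sigma> where "\<sigma> \<in> triSig"
    and "\<not> empB (set_pmf F) (\<lambda>\<sigma>. set_pmf (d \<sigma>)) \<sigma> \<subseteq> e_poss \<sigma>"
    using empB_not_below_e_poss[OF poss_proc_set_pmf poss_model_set_pmf] by blast
  then show False
    using simulates by (simp add: set_pmf_emp[symmetric] set_pmf_e_prob)
qed

end
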